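(* Let $f:\widetilde{\mathbb C}\to\widetilde{\mathbb C}$ be a generalized holomorphic function which is generalized entire, and assume $f$ is bounded: there exists $M\in\widetilde{\mathbb R}_{>0}$ with $|f(z)|<M$ for all $z\in\widetilde{\mathbb C}$. Then $f$ is constant.
   Context: Fix $I=(0,1]$ and a gauge $\rho=(\rho_\varepsilon)_{\varepsilon\in I}$ with $\rho_\varepsilon\in I$ and $\rho_\varepsilon\to0$ as $\varepsilon\to0$. "$\forall^0\varepsilon$" means "for all sufficiently small $\varepsilon\in I$". A net $(x_\varepsilon)\in\mathbb C^I$ is $\rho$-moderate ($(x_\varepsilon)\in\mathbb C_\rho$) if $\exists N\in\mathbb N\,\forall^0\varepsilon:|x_\varepsilon|\le\rho_\varepsilon^{-N}$, and $\rho$-negligible if $\forall q\in\mathbb N\,\forall^0\varepsilon:|x_\varepsilon|\le\rho_\varepsilon^q$. $\widetilde{\mathbb C}:=\mathbb C_\rho/\{\text{negligible nets}\}$ with classes $[x_\varepsilon]$; $\widetilde{\mathbb R}\subseteq\widetilde{\mathbb C}$ consists of classes of real moderate nets; $\mathrm d\rho:=[\rho_\varepsilon]$, $|[z_\varepsilon]|:=[|z_\varepsilon|]$. On $\widetilde{\mathbb R}$: $[x_\varepsilon]\le[y_\varepsilon]$ iff $x_\varepsilon\le y_\varepsilon+z_\varepsilon$ $\forall^0\varepsilon$ for some negligible $(z_\varepsilon)$; $x<y$ iff $\exists m\,\forall^0\varepsilon:y_\varepsilon-x_\varepsilon>\rho_\varepsilon^m$; $\widetilde{\mathbb R}_{>0}:=\{x:x>0\}$.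 The sharp topology on $\widetilde{\mathbb C}$ is generated by $B_r(c):=\{z:|z-c|<r\}$, $r\in\widetilde{\mathbb R}_{>0}$. Hypernatural numbers: $\widetilde{\mathbb N}:=\{[n_\varepsilon]\in\widetilde{\mathbb R}:n_\varepsilon\in\mathbb N\ \forall\varepsilon\}$; for each $N\in\widetilde{\mathbb N}$ a representative $(\mathrm{ni}(N)_\varepsilon)$ with all $\mathrm{ni}(N)_\varepsilon\in\mathbb N$ is fixed. Hyperlimit: $l=\lim_{n\in\widetilde{\mathbb N}}a_n$ means $\forall q\,\exists M\in\widetilde{\mathbb N}\,\forall n\in\widetilde{\mathbb N}:n\ge M\Rightarrow|a_n-l|<\mathrm d\rho^q$. Hyperseries: a net $(a_{n\varepsilon})_{n\in\mathbb N,\varepsilon\in I}$ is moderate over hypersums if for every $N\in\widetilde{\mathbb N}$ the net $(\sum_{n=0}^{\mathrm{ni}(N)_\varepsilon}a_{n\varepsilon})_\varepsilon$ is $\rho$-moderate; two such nets are equivalent if for all $N,M\in\widetilde{\mathbb N}$ the net $(\sum_{n=\mathrm{ni}(N)_\varepsilon}^{\mathrm{ni}(M)_\varepsilon}(a_{n\varepsilon}-\bar a_{n\varepsilon}))_\varepsilon$ is negligible; the quotient is $\widetilde{\mathbb C}_{\mathrm s}$ with classes $[b_{n\varepsilon}]_{\mathrm s}$. $\sum_{n=N}^Mb_n:=[\sum_{n=\mathrm{ni}(N)_\varepsilon}^{\mathrm{ni}(M)_\varepsilon}b_{n\varepsilon}]$, and $\sum_{n\in\widetilde{\mathbb N}}b_n:=\lim_{N\in\widetilde{\mathbb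 N}}\sum_{n=0}^Nb_n$ when this exists. Coefficients: $\widetilde{\mathbb C}_{\mathrm c}$ is the set of weakly $\rho$-moderate nets $(a_{n\varepsilon})$ ($\exists Q,R\in\mathbb N\,\forall^0\varepsilon\,\forall n\in\mathbb N:|a_{n\varepsilon}|\le\rho_\varepsilon^{-nQ-R}$) modulo strong equivalence ($\forall q,r\,\forall^0\varepsilon\,\forall n:|a_{n\varepsilon}-\bar a_{n\varepsilon}|\le\rho_\varepsilon^{nq+r}$), classes $(a_n)_{\mathrm c}=[a_{n\varepsilon}]_{\mathrm c}$. $\widetilde{\mathbb R}_\infty:=(\mathbb R\cup\{\pm\infty\})^I/\sim_\rho$, and for $x\in\widetilde{\mathbb R}$, $y\in\widetilde{\mathbb R}_\infty$, $x<y$ iff $\exists m\,\forall^0\varepsilon:y_\varepsilon>x_\varepsilon+\rho_\varepsilon^m$. Radius: $\mathrm{rad}(a_n)_{\mathrm c}:=[(\limsup_n|a_{n\varepsilon}|^{1/n})^{-1}]\in\widetilde{\mathbb R}_\infty$. Set of convergence: $S((a_n)_{\mathrm c},c)$ is the set of $z\in\widetilde{\mathbb C}$ with $|z-c|<\mathrm{rad}(a_n)_{\mathrm c}$ for which there exist representatives $z=[z_\varepsilon]$, $c=[c_\varepsilon]$, $(a_n)_{\mathrm c}=[a_{n\varepsilon}]_{\mathrm c}$ such that: (a) the net $(a_{n\varepsilon}(z_\varepsilon-c_\varepsilon)^n)_{n,\varepsilon}$ is moderate over hypersums; (b) $\sum_{n\in\widetilde{\mathbb N}}a_n(z-c)^n$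 converges and equals $[\sum_{n=0}^{\infty}a_{n\varepsilon}(z_\varepsilon-c_\varepsilon)^n]$; (c) for every representative $z=[\hat z_\varepsilon]$, the net $(\sum_{n\ge1}na_{n\varepsilon}(\hat z_\varepsilon-c_\varepsilon)^{n-1})_\varepsilon$ is $\rho$-moderate. Generalized holomorphic functions: for $U\subseteq\widetilde{\mathbb C}$ sharply open, $f:U\to\widetilde{\mathbb C}$ is a GHF if there exist open sets $\Omega_\varepsilon\subseteq\mathbb C$ and holomorphic $f_\varepsilon:\Omega_\varepsilon\to\mathbb C$ such that for every $z\in U$ and every representative $z=[z_\varepsilon]$: $z_\varepsilon\in\Omega_\varepsilon$ $\forall^0\varepsilon$, $f(z)=[f_\varepsilon(z_\varepsilon)]$, and $(f_\varepsilon^{(k)}(z_\varepsilon))\in\mathbb C_\rho$ for all $k\in\mathbb N$; $f^{(k)}(z):=[f^{(k)}_\varepsilon(z_\varepsilon)]$. Generalized entire: $f:\widetilde{\mathbb C}\to\widetilde{\mathbb C}$ is generalized entire (at $c$) if there are $c\in\widetilde{\mathbb C}$ and $(a_n)_{\mathrm c}\in\widetilde{\mathbb C}_{\mathrm c}$ with $S((a_n)_{\mathrm c},c)=\widetilde{\mathbb C}$ and $f(z)=\sum_{n\in\widetilde{\mathbb N}}a_n(z-c)^n$ for all $z\in\widetilde{\mathbb C}$. *)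

theory Defs
  imports "HOL-Complex_Analysis.Complex_Analysis"
begin

text \<open>Nets are functions real => complex (only values on I = (0,1] matter);
  generalized numbers are equivalence classes, i.e. sets of nets.
  Everything is parametric in the gauge rho.\<close>

type_synonym net = "real \<Rightarrow> complex"
type_synonym gnum = "net set"

definition ev :: "(real \<Rightarrow> bool) \<Rightarrow> bool" where
  "ev P \<longleftrightarrow> eventually P (at_right (0::real))"

definition moderate :: "(real \<Rightarrow> real) \<Rightarrow> net \<Rightarrow> bool" where
  "moderate \<rho> x \<longleftrightarrow> (\<exists>N::nat. ev (\<lambda>e. norm (x e) \<le> inverse (\<rho> e ^ N)))"

definition negligible :: "(real \<Rightarrow> real) \<Rightarrow> net \<Rightarrow> bool" where
  "negligible \<rho> x \<longleftrightarrow> (\<forall>q::nat. ev (\<lambda>e. norm (x e) \<le> \<rho> e ^ q))"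

definition cls :: "(real \<Rightarrow> real) \<Rightarrow> net \<Rightarrow> gnum" where
  "cls \<rho> x = {y. moderate \<rho> y \<and> negligible \<rho> (\<lambda>e. y e - x e)}"

definition Ct :: "(real \<Rightarrow> real) \<Rightarrow> gnum set" where
  "Ct \<rho> = cls \<rho> ` {x. moderate \<rho> x}"

definition Rt :: "(real \<Rightarrow> real) \<Rightarrow> gnum set" where
  "Rt \<rho> = cls \<rho> ` {x. moderate \<rho> x \<and> (\<forall>e. x e \<in> \<real>)}"

definition glt :: "(real \<Rightarrow> real) \<Rightarrow> gnum \<Rightarrow> gnum \<Rightarrow> bool" where
  "glt \<rho> X Y \<longleftrightarrow> (\<exists>x\<in>X. \<exists>y\<in>Y. \<exists>m::nat. ev (\<lambda>e. Re (y e) - Re (x e) > \<rho> e ^ m))"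

definition gle :: "(real \<Rightarrow> real) \<Rightarrow> gnum \<Rightarrow> gnum \<Rightarrow> bool" where
  "gle \<rho> X Y \<longleftrightarrow> (\<exists>x\<in>X. \<exists>y\<in>Y. \<exists>z. negligible \<rho> z \<and>
       ev (\<lambda>e. Re (x e) \<le> Re (y e) + Re (z e)))"

definition Rpos :: "(real \<Rightarrow> real) \<Rightarrow> gnum set" where
  "Rpos \<rho> = {X \<in> Rt \<rho>. glt \<rho> (cls \<rho> (\<lambda>_. 0)) X}"

definition gabs :: "(real \<Rightarrow> real) \<Rightarrow> gnum \<Rightarrow> gnum" where
  "gabs \<rho> X = (\<Union>x\<in>X. cls \<rho> (\<lambda>e. complex_of_real (norm (x e))))"

definition gsub :: "(real \<Rightarrow> real) \<Rightarrow> gnum \<Rightarrow> gnum \<Rightarrow> gnum" where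
  "gsub \<rho> X Y = (\<Union>x\<in>X. \<Union>y\<in>Y. cls \<rho> (\<lambda>e. x e - y e))"

definition drho_pow :: "(real \<Rightarrow> real) \<Rightarrow> nat \<Rightarrow> gnum" where
  "drho_pow \<rho> q = cls \<rho> (\<lambda>e. complex_of_real (\<rho> e ^ q))"

definition Nt :: "(real \<Rightarrow> real) \<Rightarrow> gnum set" where
  "Nt \<rho> = {N \<in> Rt \<rho>. \<exists>n::real \<Rightarrow> nat. (\<lambda>e. of_nat (n e)) \<in> N}"

definition hyperlim :: "(real \<Rightarrow> real) \<Rightarrow> (gnum \<Rightarrow> gnum) \<Rightarrow> gnum \<Rightarrow> bool" where
  "hyperlim \<rho> a l \<longleftrightarrow> (\<forall>q::nat. \<exists>M\<in>Nt \<rho>. \<forall>n\<in>Nt \<rho>.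
      gle \<rho> M n \<longrightarrow> glt \<rho> (gabs \<rho> (gsub \<rho> (a n) l)) (drho_pow \<rho> q))"

definition mod_hs :: "(real \<Rightarrow> real) \<Rightarrow> (gnum \<Rightarrow> real \<Rightarrow> nat) \<Rightarrow> (nat \<Rightarrow> net) \<Rightarrow> bool" where
  "mod_hs \<rho> ni b \<longleftrightarrow> (\<forall>N\<in>Nt \<rho>. moderate \<rho> (\<lambda>e. \<Sum>n\<le>ni N e. b n e))"

definition hps :: "(real \<Rightarrow> real) \<Rightarrow> (gnum \<Rightarrow> real \<Rightarrow> nat) \<Rightarrow> (nat \<Rightarrow> net) \<Rightarrow> gnum \<Rightarrow> gnum" where
  "hps \<rho> ni b N = cls \<rho> (\<lambda>e. \<Sum>n\<le>ni N e. b n e)"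

definition weakly_mod :: "(real \<Rightarrow> real) \<Rightarrow> (nat \<Rightarrow> net) \<Rightarrow> bool" where
  "weakly_mod \<rho> a \<longleftrightarrow> (\<exists>Q R::nat. ev (\<lambda>e. \<forall>n. norm (a n e) \<le> inverse (\<rho> e ^ (n*Q + R))))"

definition strong_eq :: "(real \<Rightarrow> real) \<Rightarrow> (nat \<Rightarrow> net) \<Rightarrow> (nat \<Rightarrow> net) \<Rightarrow> bool" where
  "strong_eq \<rho> a b \<longleftrightarrow> (\<forall>q r::nat. ev (\<lambda>e. \<forall>n. norm (a n e - b n e) \<le> \<rho> e ^ (n*q + r)))"

definition ccls :: "(real \<Rightarrow> real) \<Rightarrow> (nat \<Rightarrow> net) \<Rightarrow> (nat \<Rightarrow> net) set" where
  "ccls \<rho> a = {b. weakly_mod \<rho> b \<and> strong_eq \<rho> a b}"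

definition Cc :: "(real \<Rightarrow> real) \<Rightarrow> (nat \<Rightarrow> net) set set" where
  "Cc \<rho> = ccls \<rho> ` {a. weakly_mod \<rho> a}"

definition radn :: "(nat \<Rightarrow> net) \<Rightarrow> real \<Rightarrow> ereal" where
  "radn a e = inverse (limsup (\<lambda>n. ereal (root n (norm (a n e)))))"

text \<open>Representatives witnessing membership of z in the set of convergence S(A,c).\<close>
definition S_reps :: "(real \<Rightarrow> real) \<Rightarrow> (gnum \<Rightarrow> real \<Rightarrow> nat) \<Rightarrow> (nat \<Rightarrow> net) set \<Rightarrow> gnum \<Rightarrow> gnum
     \<Rightarrow> net \<Rightarrow> net \<Rightarrow> (nat \<Rightarrow> net) \<Rightarrow> bool" where
  "S_reps \<rho> ni A c z zr cr ar \<longleftrightarrow>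
     zr \<in> z \<and> cr \<in> c \<and> ar \<in> A \<and>
     (\<exists>m::nat. ev (\<lambda>e. radn ar e > ereal (norm (zr e - cr e) + \<rho> e ^ m))) \<and>
     mod_hs \<rho> ni (\<lambda>n e. ar n e * (zr e - cr e) ^ n) \<and>
     hyperlim \<rho> (hps \<rho> ni (\<lambda>n e. ar n e * (zr e - cr e) ^ n))
        (cls \<rho> (\<lambda>e. \<Sum>n. ar n e * (zr e - cr e) ^ n)) \<and>
     (\<forall>zh\<in>z. moderate \<rho> (\<lambda>e. \<Sum>n. of_nat (n+1) * ar (n+1) e * (zh e - cr e) ^ n))"

definition Sconv :: "(real \<Rightarrow> real) \<Rightarrow> (gnum \<Rightarrow> real \<Rightarrow> nat) \<Rightarrow> (nat \<Rightarrow> net) set \<Rightarrow> gnum \<Rightarrow> gnum set" where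
  "Sconv \<rho> ni A c = {z \<in> Ct \<rho>. \<exists>zr cr ar. S_reps \<rho> ni A c z zr cr ar}"

definition ghf :: "(real \<Rightarrow> real) \<Rightarrow> gnum set \<Rightarrow> (gnum \<Rightarrow> gnum) \<Rightarrow> bool" where
  "ghf \<rho> U f \<longleftrightarrow> (\<exists>\<Omega> F. (\<forall>e. open (\<Omega> e) \<and> F e holomorphic_on \<Omega> e) \<and>
     (\<forall>z\<in>U. \<forall>zr\<in>z. ev (\<lambda>e. zr e \<in> \<Omega> e) \<and> f z = cls \<rho> (\<lambda>e. F e (zr e)) \<and>
        (\<forall>k. moderate \<rho> (\<lambda>e. (deriv ^^ k) (F e) (zr e)))))"

definition gen_entire :: "(real \<Rightarrow> real) \<Rightarrow> (gnum \<Rightarrow> real \<Rightarrow> nat) \<Rightarrow> (gnum \<Rightarrow> gnum) \<Rightarrow> bool" where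
  "gen_entire \<rho> ni f \<longleftrightarrow> (\<exists>c\<in>Ct \<rho>. \<exists>A\<in>Cc \<rho>. Sconv \<rho> ni A c = Ct \<rho> \<and>
     (\<forall>z\<in>Ct \<rho>. \<exists>zr cr ar. S_reps \<rho> ni A c z zr cr ar \<and>
        hyperlim \<rho> (hps \<rho> ni (\<lambda>n e. ar n e * (zr e - cr e) ^ n)) (f z)))"

end

theory Submission
  imports Defs
begin

text \<open>Liouville's argument, carried out uniformly in \<open>\<epsilon>\<close>. Boundedness of \<open>f\<close> at every
  generalized point says that for each moderate net \<open>u\<close> the representatives satisfy
  \<open>|F\<^sub>\<epsilon>(u\<^sub>\<epsilon>)| \<le> \<rho>\<^sub>\<epsilon>\<^sup>-\<^sup>K\<close> for small \<open>\<epsilon>\<close>, with \<open>K\<close> coming from the bound \<open>M\<close> alone. Since a net of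
  counterexamples would itself be moderate, the bound holds on whole discs of radius \<open>\<rho>\<^sub>\<epsilon>\<^sup>-\<^sup>N\<close>,
  for every \<open>N\<close>. Cauchy's estimate on such a disc bounds \<open>|F\<^sub>\<epsilon>'|\<close> by \<open>\<rho>\<^sub>\<epsilon>\<^sup>N\<^sup>-\<^sup>K\<close> near the
  representatives of two points \<open>z\<close>, \<open>w\<close>, so \<open>F\<^sub>\<epsilon>(z\<^sub>\<epsilon>) - F\<^sub>\<epsilon>(w\<^sub>\<epsilon>)\<close> is negligible.\<close>

lemma holomorphic_lipschitz_bound:
  fixes F :: "complex \<Rightarrow> complex"
  assumes hol: "F holomorphic_on S" and "open S" and "0 < s"
    and bound: "\<And>u. dist c u \<le> r + s \<Longrightarrow> u \<in> S \<and> norm (F u) \<le> B"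
    and "z \<in> cball c r" and "w \<in> cball c r"
  shows "norm (F z - F w) \<le> B / s * norm (z - w)"
proof (rule field_differentiable_bound[where f' = "deriv F"])
  fix x assume x: "x \<in> cball c r"
  have ball_x: "cball x s \<subseteq> S"
  proof
    fix u assume "u \<in> cball x s"
    then have "dist c u \<le> r + s"
      using x dist_triangle[of c u x] by simp
    then show "u \<in> S"
      using bound by blast
  qed
  then show "(F has_field_derivative deriv F x) (at x within cball c r)"
    using hol \<open>open S\<close> \<open>0 < s\<close> by (intro holomorphic_derivI) auto
  have "norm ((deriv ^^ 1) F x) \<le> fact 1 * B / s ^ 1"
  proof (rule Cauchy_inequality)
    show "F holomorphic_on ball x s"
      using hol ball_x ball_subset_cball holomorphic_on_subset by blast
    show "continuous_on (cball x s) F"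
      using holomorphic_on_imp_continuous_on[OF hol] ball_x continuous_on_subset by blast
    show "norm (F u) \<le> B" if "norm (x - u) = s" for u
      using x that bound dist_triangle[of c u x] by (simp add: dist_norm)
  qed fact
  then show "norm (deriv F x) \<le> B / s"
    by simp
qed (use assms in auto)

lemma negligible_uminus: "negligible \<rho> a \<Longrightarrow> negligible \<rho> (\<lambda>e. - a e)"
  unfolding negligible_def by simp

lemma ev_norm_diff_le_1_if_mem_cls: "y \<in> cls \<rho> x \<Longrightarrow> ev (\<lambda>e. norm (y e - x e) \<le> 1)"
  unfolding cls_def negligible_def by (auto dest: spec[of _ 0])

lemma inverse_power_mono:
  fixes r :: real
  assumes "0 < r" "r \<le> 1" "N \<le> N'"
  shows "inverse (r ^ N) \<le> inverse (r ^ N')"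
  using assms by (intro le_imp_inverse_le power_decreasing) auto

lemma inverse_power_Suc_ge:
  fixes r :: real
  assumes "0 < r" "r \<le> 1/2"
  shows "2 * inverse (r ^ N) \<le> inverse (r ^ Suc N)"
proof -
  have "2 \<le> inverse r"
    using assms by (simp add: field_simps)
  then show ?thesis
    using assms by (simp add: inverse_mult_distrib mult_right_mono)
qed

locale small_gauge =
  fixes \<rho> :: "real \<Rightarrow> real"
  assumes gauge_small: "ev (\<lambda>e. 0 < \<rho> e \<and> \<rho> e \<le> 1/2)"
begin

lemma negligible_add:
  assumes "negligible \<rho> a" and "negligible \<rho> b"
  shows "negligible \<rho> (\<lambda>e. a e + b e)"
  unfolding negligible_def
proof
  fix q
  from gauge_small assms[unfolded negligible_def, THEN spec[of _ "Suc q"]]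
  show "ev (\<lambda>e. norm (a e + b e) \<le> \<rho> e ^ q)"
    unfolding ev_def
  proof eventually_elim
    case (elim e)
    then have "norm (a e + b e) \<le> (2 * \<rho> e) * \<rho> e ^ q"
      using norm_triangle_ineq[of "a e" "b e"] by simp
    also have "\<dots> \<le> \<rho> e ^ q"
      using elim by (intro mult_left_le_one_le) auto
    finally show ?case .
  qed
qed

lemma mem_cls_self: "moderate \<rho> x \<Longrightarrow> x \<in> cls \<rho> x"
  using gauge_small unfolding cls_def negligible_def ev_def
  by (auto elim: eventually_mono)

lemma cls_eq_if_negligible_diff:
  assumes "negligible \<rho> (\<lambda>e. a e - b e)"
  shows "cls \<rho> a = cls \<rho> b"
proof -
  have "negligible \<rho> (\<lambda>e. y e - a e) \<longleftrightarrow> negligible \<rho> (\<lambda>e. y e - b e)" for y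
    using negligible_add[OF _ assms, of "\<lambda>e. y e - a e"]
      negligible_add[OF _ negligible_uminus[OF assms], of "\<lambda>e. y e - b e"]
    by auto
  then show ?thesis
    unfolding cls_def by blast
qed

lemma moderate_bound_mono:
  fixes x :: net
  assumes "ev (\<lambda>e. norm (x e) \<le> inverse (\<rho> e ^ N))" and "N \<le> N'"
  shows "ev (\<lambda>e. norm (x e) \<le> inverse (\<rho> e ^ N'))"
  using gauge_small assms(1) unfolding ev_def
proof eventually_elim
  case (elim e)
  then have "inverse (\<rho> e ^ N) \<le> inverse (\<rho> e ^ N')"
    using \<open>N \<le> N'\<close> by (intro inverse_power_mono) auto
  with elim show ?case
    by linarith
qed

lemma moderate_add:
  assumes "moderate \<rho> x" and "moderate \<rho> y"
  shows "moderate \<rho> (\<lambda>e. x e + y e)"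
proof -
  obtain Nx Ny where "ev (\<lambda>e. norm (x e) \<le> inverse (\<rho> e ^ Nx))"
    and "ev (\<lambda>e. norm (y e) \<le> inverse (\<rho> e ^ Ny))"
    using assms unfolding moderate_def by blast
  then have "ev (\<lambda>e. norm (x e) \<le> inverse (\<rho> e ^ max Nx Ny))"
    and "ev (\<lambda>e. norm (y e) \<le> inverse (\<rho> e ^ max Nx Ny))"
    by (auto elim!: moderate_bound_mono)
  with gauge_small have "ev (\<lambda>e. norm (x e + y e) \<le> inverse (\<rho> e ^ Suc (max Nx Ny)))"
    unfolding ev_def
  proof eventually_elim
    case (elim e)
    then show ?case
      using norm_triangle_ineq[of "x e" "y e"] inverse_power_Suc_ge[of "\<rho> e" "max Nx Ny"] by linarith
  qed
  then show ?thesis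
    unfolding moderate_def by blast
qed

lemma moderate_const: "moderate \<rho> (\<lambda>_. c)"
proof -
  obtain N where N: "norm c < 2 ^ N"
    using real_arch_pow[of 2 "norm c"] by auto
  from gauge_small have "ev (\<lambda>e. norm c \<le> inverse (\<rho> e ^ N))"
    unfolding ev_def
  proof eventually_elim
    case (elim e)
    then have "(2::real) ^ N \<le> inverse (\<rho> e) ^ N"
      by (intro power_mono) (auto simp: field_simps)
    then show ?case
      using N by (simp add: power_inverse)
  qed
  then show ?thesis
    unfolding moderate_def by blast
qed

lemma norm_le_if_glt_gabs:
  assumes "glt \<rho> (gabs \<rho> (cls \<rho> x)) (cls \<rho> y)"
  shows "ev (\<lambda>e. norm (x e) \<le> norm (y e) + 3)"
proof -
  obtain a y' m where a: "a \<in> gabs \<rho> (cls \<rho> x)" and y': "y' \<in> cls \<rho> y"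
    and less: "ev (\<lambda>e. Re (y' e) - Re (a e) > \<rho> e ^ m)"
    using assms unfolding glt_def by blast
  obtain x' where x': "x' \<in> cls \<rho> x" and a_abs: "a \<in> cls \<rho> (\<lambda>e. complex_of_real (norm (x' e)))"
    using a unfolding gabs_def by blast
  from gauge_small less ev_norm_diff_le_1_if_mem_cls[OF x'] ev_norm_diff_le_1_if_mem_cls[OF a_abs]
    ev_norm_diff_le_1_if_mem_cls[OF y']
  show ?thesis
    unfolding ev_def
  proof eventually_elim
    case (elim e)
    have "norm (x e) \<le> norm (x' e) + 1"
      using elim norm_triangle_ineq3[of "x' e" "x e"] by (simp add: norm_minus_commute)
    moreover have "norm (x' e) \<le> Re (a e) + 1"
      using elim abs_Re_le_cmod[of "a e - complex_of_real (norm (x' e))"] by simp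
    moreover have "Re (y' e) \<le> norm (y e) + 1"
      using elim abs_Re_le_cmod[of "y' e - y e"] complex_Re_le_cmod[of "y e"] by simp
    moreover have "0 < \<rho> e ^ m"
      using elim by simp
    ultimately show ?case
      using elim by linarith
  qed
qed

lemma eventually_uniform_if_all_moderate:
  assumes "\<And>u. moderate \<rho> u \<Longrightarrow> ev (\<lambda>e. P e (u e))"
  shows "ev (\<lambda>e. \<forall>v. norm v \<le> inverse (\<rho> e ^ N) \<longrightarrow> P e v)"
proof -
  define bad where "bad e v \<longleftrightarrow> norm v \<le> inverse (\<rho> e ^ N) \<and> \<not> P e v" for e v
  define u where "u e = (if \<exists>v. bad e v then SOME v. bad e v else 0)" for e
  have bad_u: "bad e (u e)" if "\<exists>v. bad e v" for e
    using someI_ex[OF that] that unfolding u_def by simp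
  from gauge_small have "ev (\<lambda>e. norm (u e) \<le> inverse (\<rho> e ^ N))"
    unfolding ev_def
  proof eventually_elim
    case (elim e)
    show ?case
    proof (cases "\<exists>v. bad e v")
      case True
      then show ?thesis
        using bad_u unfolding bad_def by blast
    next
      case False
      then show ?thesis
        using elim unfolding u_def by auto
    qed
  qed
  then have "moderate \<rho> u"
    unfolding moderate_def by blast
  from assms[OF this] show ?thesis
    unfolding ev_def
    by eventually_elim (use bad_u in \<open>auto simp: bad_def\<close>)
qed

lemma negligible_diff_if_uniformly_bounded:
  assumes hol: "\<And>e. F e holomorphic_on \<Omega> e" and open_\<Omega>: "\<And>e. open (\<Omega> e)"
    and uniform: "\<And>N. ev (\<lambda>e. \<forall>v. norm v \<le> inverse (\<rho> e ^ N) \<longrightarrow>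
                           v \<in> \<Omega> e \<and> norm (F e v) \<le> inverse (\<rho> e ^ K))"
    and "moderate \<rho> z" and "moderate \<rho> w"
  shows "negligible \<rho> (\<lambda>e. F e (z e) - F e (w e))"
proof -
  obtain Nz Nw where Nz: "ev (\<lambda>e. norm (z e) \<le> inverse (\<rho> e ^ Nz))"
    and Nw: "ev (\<lambda>e. norm (w e) \<le> inverse (\<rho> e ^ Nw))"
    using assms unfolding moderate_def by blast
  define N0 where "N0 = max Nz Nw"
  have z: "ev (\<lambda>e. norm (z e) \<le> inverse (\<rho> e ^ N0))"
    and w: "ev (\<lambda>e. norm (w e) \<le> inverse (\<rho> e ^ N0))"
    using Nz Nw unfolding N0_def by (auto elim!: moderate_bound_mono)
  show ?thesis
    unfolding negligible_def
  proof
    fix q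
    define N where "N = N0 + K + Suc q"
    from gauge_small z w uniform[of "Suc N"]
    show "ev (\<lambda>e. norm (F e (z e) - F e (w e)) \<le> \<rho> e ^ q)"
      unfolding ev_def
    proof eventually_elim
      case (elim e)
      define r where "r = \<rho> e"
      have r: "0 < r" "r \<le> 1/2"
        using elim r_def by auto
      have "inverse (r ^ N0) + inverse (r ^ N) \<le> 2 * inverse (r ^ N)"
        using inverse_power_mono[of r N0 N] r by (simp add: N_def)
      also have "\<dots> \<le> inverse (r ^ Suc N)"
        using inverse_power_Suc_ge r by blast
      finally have radius: "inverse (r ^ N0) + inverse (r ^ N) \<le> inverse (r ^ Suc N)" .
      have "norm (F e (z e) - F e (w e)) \<le> inverse (r ^ K) / inverse (r ^ N) * norm (z e - w e)"
      proof (rule holomorphic_lipschitz_bound[OF hol open_\<Omega>])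
        show "u \<in> \<Omega> e \<and> norm (F e u) \<le> inverse (r ^ K)"
          if "dist 0 u \<le> inverse (r ^ N0) + inverse (r ^ N)" for u
          using that radius elim unfolding r_def by simp
      qed (use elim r_def r in auto)
      also have "\<dots> \<le> inverse (r ^ K) / inverse (r ^ N) * (2 * inverse (r ^ N0))"
        using elim norm_triangle_ineq4[of "z e" "w e"] r unfolding r_def
        by (intro mult_left_mono) auto
      also have "\<dots> = 2 * r * r ^ q"
        using r by (simp add: N_def power_add field_simps)
      also have "\<dots> \<le> r ^ q"
        using r by (intro mult_left_le_one_le) auto
      finally show ?case
        unfolding r_def .
    qed
  qed
qed

lemma ghf_bounded_imp_constant:
  assumes hol: "ghf \<rho> (Ct \<rho>) f" and "M \<in> Ct \<rho>"
    and bounded: "\<forall>z\<in>Ct \<rho>. glt \<rho> (gabs \<rho> (f z)) M"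
    and "z \<in> Ct \<rho>" and "w \<in> Ct \<rho>"
  shows "f z = f w"
proof -
  obtain \<Omega> F where hol_F: "\<forall>e. open (\<Omega> e) \<and> F e holomorphic_on \<Omega> e"
    and f_F: "\<And>z zr. z \<in> Ct \<rho> \<Longrightarrow> zr \<in> z \<Longrightarrow>
                 ev (\<lambda>e. zr e \<in> \<Omega> e) \<and> f z = cls \<rho> (\<lambda>e. F e (zr e))"
    using hol unfolding ghf_def by meson
  have f_cls: "ev (\<lambda>e. u e \<in> \<Omega> e) \<and> f (cls \<rho> u) = cls \<rho> (\<lambda>e. F e (u e))"
    if "moderate \<rho> u" for u
    using f_F[of "cls \<rho> u" u] mem_cls_self[OF that] that unfolding Ct_def by blast
  obtain y where M: "M = cls \<rho> y" and "moderate \<rho> y"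
    using \<open>M \<in> Ct \<rho>\<close> unfolding Ct_def by blast
  then have "moderate \<rho> (\<lambda>e. complex_of_real (norm (y e)))"
    by (simp add: moderate_def)
  from moderate_add[OF this moderate_const[of 3]]
  have "moderate \<rho> (\<lambda>e. complex_of_real (norm (y e) + 3))"
    by simp
  then obtain K where K: "ev (\<lambda>e. norm (y e) + 3 \<le> inverse (\<rho> e ^ K))"
    unfolding moderate_def by (auto simp: abs_of_nonneg)
  have pointwise: "ev (\<lambda>e. u e \<in> \<Omega> e \<and> norm (F e (u e)) \<le> inverse (\<rho> e ^ K))"
    if "moderate \<rho> u" for u
  proof -
    have "cls \<rho> u \<in> Ct \<rho>"
      using that unfolding Ct_def by blast
    then have "glt \<rho> (gabs \<rho> (cls \<rho> (\<lambda>e. F e (u e)))) (cls \<rho> y)"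
      using bounded f_cls[OF that] M by metis
    from K conjunct1[OF f_cls[OF that]] norm_le_if_glt_gabs[OF this] show ?thesis
      unfolding ev_def by eventually_elim auto
  qed
  obtain zr wr where "z = cls \<rho> zr" "moderate \<rho> zr" "w = cls \<rho> wr" "moderate \<rho> wr"
    using \<open>z \<in> Ct \<rho>\<close> \<open>w \<in> Ct \<rho>\<close> unfolding Ct_def by blast
  moreover have "negligible \<rho> (\<lambda>e. F e (zr e) - F e (wr e))"
    using hol_F eventually_uniform_if_all_moderate[
        where P = "\<lambda>e v. v \<in> \<Omega> e \<and> norm (F e v) \<le> inverse (\<rho> e ^ K)", OF pointwise]
    by (intro negligible_diff_if_uniformly_bounded[OF _ _ _ \<open>moderate \<rho> zr\<close> \<open>moderate \<rho> wr\<close>]) auto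
  ultimately show ?thesis
    using f_cls cls_eq_if_negligible_diff by simp
qed

end

theorem theorem3p4:
  fixes \<rho> :: "real \<Rightarrow> real" and ni :: "gnum \<Rightarrow> real \<Rightarrow> nat" and f :: "gnum \<Rightarrow> gnum"
  assumes gauge: "\<forall>e. 0 < e \<and> e \<le> 1 \<longrightarrow> 0 < \<rho> e \<and> \<rho> e \<le> 1"
    and gauge_lim: "(\<rho> \<longlongrightarrow> 0) (at_right 0)"
    and ni_rep: "\<forall>N\<in>Nt \<rho>. (\<lambda>e. of_nat (ni N e)) \<in> N"
    and hol: "ghf \<rho> (Ct \<rho>) f"
    and entire: "gen_entire \<rho> ni f"
    and bounded: "\<exists>M\<in>Rpos \<rho>. \<forall>z\<in>Ct \<rho>. glt \<rho> (gabs \<rho> (f z)) M"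
  shows "\<forall>z\<in>Ct \<rho>. \<forall>w\<in>Ct \<rho>. f z = f w"
proof -
  have "eventually (\<lambda>e. \<rho> e < 1/2) (at_right 0)"
    by (rule order_tendstoD(2)[OF gauge_lim]) simp
  moreover have "eventually (\<lambda>e::real. 0 < e \<and> e \<le> 1) (at_right 0)"
    unfolding eventually_at_right_field by (intro exI[of _ 1]) auto
  ultimately have "ev (\<lambda>e. 0 < \<rho> e \<and> \<rho> e \<le> 1/2)"
    unfolding ev_def by eventually_elim (use gauge in auto)
  then interpret small_gauge \<rho>
    by unfold_locales
  obtain M where "M \<in> Rpos \<rho>" and "\<forall>z\<in>Ct \<rho>. glt \<rho> (gabs \<rho> (f z)) M"
    using bounded by blast
  moreover have "Rpos \<rho> \<subseteq> Ct \<rho>"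
    unfolding Rpos_def Rt_def Ct_def by blast
  ultimately show ?thesis
    using ghf_bounded_imp_constant[OF hol] by blast
qed

end
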